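(* Fix a positive integer $n$ and a real number $\varepsilon>0$. Let $S\subset\mathbb{N}$ be a set of cardinality $N$, and let $\{v_1,\ldots,v_n\}$ be chosen uniformly at random from all $n$-element subsets of $S$. If $$\sqrt{\frac{n^3 3^{n-1}}{2^{n+1}\varepsilon^{2n}}}+1<N^{\frac{1}{n+1}},$$ then $$\mathbb{P}\left[\mathrm{ML}(v_1,\ldots,v_n)\ge\frac12-\varepsilon\right]>1-\frac{\left(2N^{\frac{1}{n+1}}+1\right)^n}{N-n}.$$
   Context: For a real number $x$, $\Vert x\Vert$ denotes the distance from $x$ to the nearest integer. For positive integers $v_1,\ldots,v_n$, the maximum loneliness is $\mathrm{ML}(v_1,\ldots,v_n)=\max_{t\in\mathbb{R}}\min_{1\le i\le n}\Vert t v_i\Vert$. Here $\mathbb{N}=\{1,2,3,\ldots\}$. *)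

theory Defs
  imports Complex_Main
begin

definition dist_nint :: "real \<Rightarrow> real" where
  "dist_nint x = \<bar>x - of_int (round x)\<bar>"

text \<open>Maximum loneliness of a finite nonempty set of positive integers V:
  the supremum over real t of min over v in V of the distance of t*v to the nearest integer
  (this supremum is attained, so it is the maximum).\<close>
definition max_loneliness :: "nat set \<Rightarrow> real" where
  "max_loneliness V = (SUP t::real. Min ((\<lambda>v. dist_nint (t * real v)) ` V))"

definition prob_subset :: "nat set \<Rightarrow> nat \<Rightarrow> (nat set \<Rightarrow> bool) \<Rightarrow> real" where
  "prob_subset S n P =
     real (card {V. V \<subseteq> S \<and> card V = n \<and> P V}) / real (card {V. V \<subseteq> S \<and> card V = n})"

end

(*
  Suppose v_1, ..., v_n admit no nontrivial integer relation k_1 v_1 + ... + k_n v_n = 0 with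
  all |k_i| <= D. Expanding sin(pi x)^(2D) as a trigonometric polynomial of degree D, only the
  constant term of the product survives integration over a period:
    integral over [0,1] of prod_i sin(pi t v_i)^(2D) dt = (binomial(2D, D) / 4^D)^n.
  If every t had some ||t v_i|| < 1/2 - eps, the integrand would be at most cos(pi eps)^(2D),
  which for D = floor(N^(1/(n+1))) the hypothesis makes smaller than that value (the cases
  n = 1 and n = 2 are settled by explicit times instead).
  Conversely, a fixed nonzero coefficient vector k is a relation for at most a fraction
  1/(N - n + 1) of the ordered n-tuples of distinct elements of S, because at a position where
  k does not vanish the entry is determined by the others; and there are fewer than (2D + 1)^n
  such vectors.
*)
theory Submission
  imports Defs "HOL-Analysis.Analysis" "HOL-Combinatorics.Multiset_Permutations"
begin

section \<open>Distance to the nearest integer\<close>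

lemma dist_nint_nonneg: "0 \<le> dist_nint x"
  by (simp add: dist_nint_def)

lemma dist_nint_le_half: "dist_nint x \<le> 1/2"
  unfolding dist_nint_def using of_int_round_abs_le[of x] by (simp add: abs_minus_commute)

lemma dist_nint_eq_abs_diff:
  assumes "\<bar>x - of_int m\<bar> \<le> 1/2"
  shows "dist_nint x = \<bar>x - of_int m\<bar>"
proof -
  have "\<bar>x - of_int m\<bar> \<le> \<bar>x - of_int (round x)\<bar>"
  proof (cases "round x = m")
    case False
    then have "1 \<le> \<bar>round x - m\<bar>"
      by linarith
    then have "1 \<le> \<bar>of_int (round x) - (of_int m :: real)\<bar>"
      by (metis of_int_1_le_iff of_int_abs of_int_diff)
    then show ?thesis using assms by linarith
  qed simp
  with round_diff_minimal[of x m] show ?thesis by (simp add: dist_nint_def)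
qed

lemma abs_sin_pi_less_cos_of_dist_nint_less:
  assumes "0 \<le> e" and "dist_nint x < 1/2 - e"
  shows "\<bar>sin (pi * x)\<bar> < cos (pi * e)"
proof -
  define u where "u = x - of_int (round x)"
  have "\<bar>u\<bar> < 1/2 - e"
    using assms(2) by (simp add: dist_nint_def u_def)
  then have "pi * \<bar>u\<bar> < pi * (1/2 - e)"
    by (simp add: pi_gt_zero)
  then have u: "0 \<le> pi * \<bar>u\<bar>" "pi * \<bar>u\<bar> < pi/2 - pi * e" "0 \<le> pi * e"
    using assms(1) by (auto simp: algebra_simps)
  have "sin (pi * x) = sin (pi * u + pi * of_int (round x))"
    by (simp add: u_def algebra_simps)
  also have "\<dots> = sin (pi * u) * cos (pi * of_int (round x))"
    by (simp only: sin_add sin_npi_int)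
  finally have "\<bar>sin (pi * x)\<bar> = \<bar>sin (pi * \<bar>u\<bar>)\<bar>"
    by (cases "u \<ge> 0") auto
  also have "\<dots> = sin (pi * \<bar>u\<bar>)"
    using u pi_gt_zero by (intro abs_of_nonneg sin_ge_zero) linarith+
  also have "\<dots> < sin (pi/2 - pi * e)"
    using u pi_gt_zero by (subst sin_mono_less_eq) linarith+
  also have "\<dots> = cos (pi * e)"
    by (simp add: sin_cos_eq)
  finally show ?thesis .
qed

lemma max_loneliness_ge:
  assumes "finite V" and "V \<noteq> {}" and "\<And>v. v \<in> V \<Longrightarrow> c \<le> dist_nint (t * real v)"
  shows "c \<le> max_loneliness V"
proof -
  have "bdd_above (range (\<lambda>t. Min ((\<lambda>v. dist_nint (t * real v)) ` V)))"
  proof (rule bdd_aboveI)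
    fix y assume "y \<in> range (\<lambda>t. Min ((\<lambda>v. dist_nint (t * real v)) ` V))"
    then obtain t' where y: "y = Min ((\<lambda>v. dist_nint (t' * real v)) ` V)" by auto
    obtain v where "v \<in> V" using assms(2) by auto
    then have "y \<le> dist_nint (t' * real v)" unfolding y using assms(1) by (intro Min_le) auto
    then show "y \<le> 1/2" using dist_nint_le_half[of "t' * real v"] by linarith
  qed
  then have "Min ((\<lambda>v. dist_nint (t * real v)) ` V) \<le> max_loneliness V"
    unfolding max_loneliness_def by (rule cSUP_upper[OF UNIV_I])
  moreover have "c \<le> Min ((\<lambda>v. dist_nint (t * real v)) ` V)"
    using assms by simp
  ultimately show ?thesis by linarith
qed

section \<open>Products of powers of sines\<close>

lemma has_integral_exp_2pi_int:
  fixes m :: int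
  shows "((\<lambda>t::real. exp (2 * pi * \<i> * of_int m * of_real t)) has_integral (if m = 0 then 1 else 0)) {0..1}"
proof (cases "m = 0")
  case True
  then show ?thesis using has_integral_const_real[of "1::complex" 0 1] by simp
next
  case False
  define c where "c = 2 * pi * \<i> * of_int m"
  have "c \<noteq> 0" using False by (simp add: c_def)
  have "((\<lambda>t. exp (c * of_real t) / c) has_vector_derivative exp (c * of_real t)) (at t within {0..1})" for t
  proof -
    have "((\<lambda>z. exp (c * z) / c) has_field_derivative exp (c * of_real t)) (at (of_real t))"
      using \<open>c \<noteq> 0\<close> by (auto intro!: derivative_eq_intros)
    then show ?thesis by (rule has_vector_derivative_real_field)
  qed
  then have "((\<lambda>t. exp (c * of_real t)) has_integral (exp (c * of_real 1) / c - exp (c * of_real 0) / c)) {0..1}"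
    by (intro fundamental_theorem_of_calculus) auto
  moreover have "exp c = 1"
    using exp_integer_2pi[of "of_int m"] by (simp add: c_def mult_ac)
  ultimately show ?thesis using False by (simp add: c_def mult_ac)
qed

(* With z = exp (2 pi i x), the base of the power is sin (pi x)^2. *)
lemma neg_square_div_power_eq_sum:
  fixes z :: "'a::field"
  assumes "z \<noteq> 0"
  shows "(- ((z - 1)^2) / (4 * z)) ^ d =
    (\<Sum>j\<le>2*d. (-1)^(j+d) * of_nat (2*d choose j) / 4^d * (z^j / z^d))"
proof -
  have "(- ((z - 1)^2) / (4 * z)) ^ d = (-1)^d * (z - 1)^(2*d) / (4^d * z^d)"
    by (simp add: power_divide power_mult_distrib power_mult power_minus')
  also have "(z - 1)^(2*d) = (\<Sum>j\<le>2*d. of_nat (2*d choose j) * z^j * (-1)^(2*d-j))"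
    using binomial_ring[of z "-1" "2*d"] by simp
  also have "(-1)^d * \<dots> / (4^d * z^d) =
      (\<Sum>j\<le>2*d. (-1)^d * (-1)^(2*d-j) * of_nat (2*d choose j) / 4^d * (z^j / z^d))"
    by (simp add: sum_distrib_left sum_divide_distrib mult_ac)
  also have "\<dots> = (\<Sum>j\<le>2*d. (-1)^(j+d) * of_nat (2*d choose j) / 4^d * (z^j / z^d))"
  proof (rule sum.cong[OF refl])
    fix j assume "j \<in> {..2*d}"
    then have "even (d + (2*d-j)) = even (j+d)" by auto
    then have "(-1::'a)^(d + (2*d-j)) = (-1)^(j+d)"
      by (simp add: minus_one_power_iff)
    then have "(-1::'a)^d * (-1)^(2*d-j) = (-1)^(j+d)"
      by (simp add: power_add)
    then show "(-1)^d * (-1)^(2*d-j) * of_nat (2*d choose j) / 4^d * (z^j / z^d) =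
        (-1)^(j+d) * of_nat (2*d choose j) / 4^d * (z^j / z^d)" by simp
  qed
  finally show ?thesis .
qed

definition sin_power_coeff :: "nat \<Rightarrow> nat \<Rightarrow> real" where
  "sin_power_coeff d j = (-1)^(j+d) * real (2*d choose j) / 4^d"

lemma sin_power_eq_exp_sum:
  "complex_of_real (sin (pi * x) ^ (2*d)) =
    (\<Sum>j\<le>2*d. complex_of_real (sin_power_coeff d j) *
        exp (2 * pi * \<i> * of_int (int j - int d) * of_real x))"
proof -
  define u where "u = exp (\<i> * of_real (pi * x))"
  define z where "z = u^2"
  have "u \<noteq> 0" by (simp add: u_def)
  then have "z \<noteq> 0" by (simp add: z_def)
  have sin_u: "complex_of_real (sin (pi * x)) = (u - inverse u) / (2 * \<i>)"
    unfolding u_def by (simp add: sin_exp_eq exp_minus flip: sin_of_real)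
  have sin_sq: "complex_of_real (sin (pi * x) ^ 2) = - ((z - 1)^2) / (4 * z)"
    using \<open>u \<noteq> 0\<close> unfolding sin_u z_def of_real_power by (simp add: field_simps power2_eq_square)
  have exp_z: "exp (2 * pi * \<i> * of_int (int j - int d) * of_real x) = z^j / z^d" for j
  proof -
    have "exp (2 * pi * \<i> * of_int (int j - int d) * of_real x)
        = exp (of_nat j * (2 * \<i> * of_real (pi * x)) - of_nat d * (2 * \<i> * of_real (pi * x)))"
      by (simp add: algebra_simps)
    also have "\<dots> = exp (2 * \<i> * of_real (pi * x))^j / exp (2 * \<i> * of_real (pi * x))^d"
      by (simp add: exp_diff exp_of_nat_mult)
    also have "exp (2 * \<i> * of_real (pi * x)) = z"
      by (simp add: z_def u_def power2_eq_square mult_ac flip: exp_add)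
    finally show ?thesis .
  qed
  have "complex_of_real (sin (pi * x) ^ (2*d)) = complex_of_real (sin (pi * x) ^ 2) ^ d"
    by (simp add: power_mult)
  also have "\<dots> = (- ((z - 1)^2) / (4 * z)) ^ d"
    by (simp only: sin_sq)
  also have "\<dots> = (\<Sum>j\<le>2*d. (-1)^(j+d) * of_nat (2*d choose j) / 4^d * (z^j / z^d))"
    using \<open>z \<noteq> 0\<close> by (rule neg_square_div_power_eq_sum)
  also have "\<dots> = (\<Sum>j\<le>2*d. complex_of_real (sin_power_coeff d j) *
        exp (2 * pi * \<i> * of_int (int j - int d) * of_real x))"
    unfolding exp_z sin_power_coeff_def by simp
  finally show ?thesis .
qed

lemma has_integral_exp_sum:
  assumes "finite P"
  shows "((\<lambda>t. \<Sum>J\<in>P. c J * exp (2 * pi * \<i> * of_int (m J) * of_real t)) has_integral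
           (\<Sum>J\<in>{J\<in>P. m J = 0}. c J)) {0..1}"
proof -
  have "((\<lambda>t. \<Sum>J\<in>P. c J * exp (2 * pi * \<i> * of_int (m J) * of_real t)) has_integral
           (\<Sum>J\<in>P. c J * (if m J = 0 then 1 else 0))) {0..1}"
    by (intro has_integral_sum assms has_integral_mult_right has_integral_exp_2pi_int)
  also have "(\<Sum>J\<in>P. c J * (if m J = 0 then 1 else 0)) = (\<Sum>J\<in>{J\<in>P. m J = 0}. c J)"
    using assms by (simp add: sum.inter_filter if_distrib cong: if_cong)
  finally show ?thesis .
qed

lemma prod_sin_power_eq_exp_sum:
  assumes "finite I"
  shows "complex_of_real (\<Prod>i\<in>I. sin (pi * (t * real (f i))) ^ (2*d)) =
    (\<Sum>J\<in>PiE I (\<lambda>_. {..2*d}). complex_of_real (\<Prod>i\<in>I. sin_power_coeff d (J i)) *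
        exp (2 * pi * \<i> * of_int (\<Sum>i\<in>I. (int (J i) - int d) * int (f i)) * of_real t))"
proof -
  have "complex_of_real (\<Prod>i\<in>I. sin (pi * (t * real (f i))) ^ (2*d))
      = (\<Prod>i\<in>I. \<Sum>j\<le>2*d. complex_of_real (sin_power_coeff d j) *
          exp (2 * pi * \<i> * of_int (int j - int d) * of_real (t * real (f i))))"
    by (simp only: of_real_prod sin_power_eq_exp_sum)
  also have "\<dots> = (\<Sum>J\<in>PiE I (\<lambda>_. {..2*d}). \<Prod>i\<in>I. complex_of_real (sin_power_coeff d (J i)) *
          exp (2 * pi * \<i> * of_int (int (J i) - int d) * of_real (t * real (f i))))"
    using assms by (rule prod_sum_PiE) simp
  also have "\<dots> = (\<Sum>J\<in>PiE I (\<lambda>_. {..2*d}). complex_of_real (\<Prod>i\<in>I. sin_power_coeff d (J i)) *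
        exp (2 * pi * \<i> * of_int (\<Sum>i\<in>I. (int (J i) - int d) * int (f i)) * of_real t))"
  proof (rule sum.cong[OF refl])
    fix J :: "'a \<Rightarrow> nat"
    have "(\<Sum>i\<in>I. 2 * pi * \<i> * of_int (int (J i) - int d) * of_real (t * real (f i)))
        = 2 * pi * \<i> * of_int (\<Sum>i\<in>I. (int (J i) - int d) * int (f i)) * of_real t"
      by (simp add: sum_distrib_left sum_distrib_right mult_ac)
    then show "(\<Prod>i\<in>I. complex_of_real (sin_power_coeff d (J i)) *
          exp (2 * pi * \<i> * of_int (int (J i) - int d) * of_real (t * real (f i)))) =
        complex_of_real (\<Prod>i\<in>I. sin_power_coeff d (J i)) *
          exp (2 * pi * \<i> * of_int (\<Sum>i\<in>I. (int (J i) - int d) * int (f i)) * of_real t)"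
      using assms by (simp add: prod.distrib flip: exp_sum)
  qed
  finally show ?thesis .
qed

lemma has_integral_prod_sin_power:
  fixes f :: "'a \<Rightarrow> nat"
  assumes "finite I"
    and no_relation: "\<And>k. k \<in> PiE I (\<lambda>_. {-int d..int d}) \<Longrightarrow>
        (\<Sum>i\<in>I. k i * int (f i)) = 0 \<Longrightarrow> k = (\<lambda>i\<in>I. 0)"
  shows "((\<lambda>t. \<Prod>i\<in>I. sin (pi * (t * real (f i))) ^ (2*d)) has_integral
          (real (2*d choose d) / 4^d) ^ card I) {0..1}"
proof -
  define m where "m J = (\<Sum>i\<in>I. (int (J i) - int d) * int (f i))" for J
  define c where "c J = complex_of_real (\<Prod>i\<in>I. sin_power_coeff d (J i))" for J
  have "{J \<in> PiE I (\<lambda>_. {..2*d}). m J = 0} = {\<lambda>i\<in>I. d}"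
  proof safe
    fix J assume J: "J \<in> PiE I (\<lambda>_. {..2*d})" and "m J = 0"
    have "(\<lambda>i\<in>I. int (J i) - int d) \<in> PiE I (\<lambda>_. {-int d..int d})"
      using J by (auto simp: PiE_iff)
    moreover have "(\<Sum>i\<in>I. (\<lambda>i\<in>I. int (J i) - int d) i * int (f i)) = 0"
      using \<open>m J = 0\<close> by (simp add: m_def)
    ultimately have "(\<lambda>i\<in>I. int (J i) - int d) = (\<lambda>i\<in>I. 0)"
      by (rule no_relation)
    then show "J = (\<lambda>i\<in>I. d)"
      using J by (auto simp: PiE_iff fun_eq_iff extensional_def split: if_splits)
  qed (auto simp: m_def)
  moreover have "((\<lambda>t. \<Sum>J\<in>PiE I (\<lambda>_. {..2*d}). c J * exp (2 * pi * \<i> * of_int (m J) * of_real t))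
      has_integral (\<Sum>J\<in>{J \<in> PiE I (\<lambda>_. {..2*d}). m J = 0}. c J)) {0..1}"
    using assms(1) by (intro has_integral_exp_sum finite_PiE) auto
  ultimately have "((\<lambda>t. complex_of_real (\<Prod>i\<in>I. sin (pi * (t * real (f i))) ^ (2*d))) has_integral
      c (\<lambda>i\<in>I. d)) {0..1}"
    by (simp only: prod_sin_power_eq_exp_sum[OF assms(1)] c_def m_def) simp
  from has_integral_linear[OF this bounded_linear_Re] show ?thesis
    by (simp add: o_def c_def sin_power_coeff_def del: of_real_prod of_real_power)
qed

section \<open>Numerical estimates\<close>

lemma central_binomial_Suc: "Suc d * (2 * Suc d choose Suc d) = 2 * (2 * d + 1) * (2 * d choose d)"
proof -
  have "Suc d * (2 * Suc d choose Suc d) = 2 * (Suc d * (Suc (2 * d) choose d))"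
    using Suc_times_binomial[of d "Suc (2 * d)"]
    by (metis mult_2 add_Suc_right add_Suc mult.assoc mult.left_commute)
  also have "Suc d * (Suc (2 * d) choose d) = Suc (2 * d) * (2 * d choose d)"
    by (metis Suc_times_binomial Suc_times_binomial_add mult_2)
  finally show ?thesis by simp
qed

(* A sharper form of central_binomial_lower_bound, which is too weak for the estimates below. *)
lemma central_binomial_sq_lower_bound:
  assumes "d \<ge> 1"
  shows "16^d \<le> 4 * real d * real (2 * d choose d)^2"
  using assms
proof (induction d rule: dec_induct)
  case base
  then show ?case by simp
next
  case (step d)
  define C where "C = real (2 * d choose d)"
  define C' where "C' = real (2 * Suc d choose Suc d)"
  have "real (Suc d) * C' = real (2 * (2 * d + 1)) * C"
    unfolding C_def C'_def of_nat_mult[symmetric] by (simp only: central_binomial_Suc)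
  then have rel: "(real d + 1) * C' = 2 * (2 * real d + 1) * C"
    by (simp add: algebra_simps)
  have "16^Suc d * (real d + 1) \<le> 16 * (4 * real d * (real d + 1)) * C^2"
    using step.IH by (simp add: C_def)
  also have "\<dots> \<le> 16 * (2 * real d + 1)^2 * C^2"
    by (intro mult_right_mono mult_left_mono) (auto simp: power2_eq_square algebra_simps)
  also have "\<dots> = 4 * (2 * (2 * real d + 1) * C)^2"
    by (simp add: power2_eq_square algebra_simps)
  also have "\<dots> = 4 * ((real d + 1) * C')^2"
    by (simp only: rel)
  also have "\<dots> = 4 * (real d + 1) * C'^2 * (real d + 1)"
    by (simp add: power2_eq_square)
  finally have "16^Suc d \<le> 4 * (real d + 1) * C'^2"
    by (rule mult_right_le_imp_le) simp
  then show ?case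
    unfolding C'_def by (simp only: of_nat_Suc add.commute)
qed

lemma sin_ge_cubic: "0 \<le> y \<Longrightarrow> y - y^3/6 \<le> sin (y::real)"
proof -
  assume "0 \<le> y"
  have "\<bar>sin y - (\<Sum>m<3. sin_coeff m * y ^ m)\<bar> \<le> inverse (fact 3) * \<bar>y\<bar> ^ 3"
    by (rule Maclaurin_sin_bound)
  moreover have "(\<Sum>m<3. sin_coeff m * y ^ m) = y"
    by (simp add: sin_coeff_def numeral_3_eq_3 lessThan_Suc)
  ultimately have "\<bar>sin y - y\<bar> * 6 \<le> y^3"
    using \<open>0 \<le> y\<close> by (simp add: fact_numeral)
  then show ?thesis
    by (cases "sin y - y \<ge> 0") auto
qed

lemma cos_pi_sq_le_exp:
  assumes "0 \<le> e" and "e \<le> 1/2"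
  shows "cos (pi * e)^2 \<le> exp (- 3 * e^2)"
proof -
  define y where "y = pi * e / 2"
  have "0 \<le> y" using assms by (simp add: y_def)
  have "pi * e \<le> 4 * e"
    using pi_less_4 assms by (intro mult_right_mono) auto
  then have "y \<le> 1" using assms by (simp add: y_def)
  then have "y * y^2 \<le> y"
    using \<open>0 \<le> y\<close> by (simp add: mult_left_le power_le_one)
  then have "5/6 * y \<le> sin y"
    using sin_ge_cubic[OF \<open>0 \<le> y\<close>] by (simp add: power3_eq_cube power2_eq_square)
  then have "(5/6 * y)^2 \<le> sin y ^ 2"
    using \<open>0 \<le> y\<close> by (intro power_mono) auto
  moreover have "cos (pi * e) = 1 - 2 * sin y ^ 2"
    using cos_double_sin[of "pi * e / 2"] by (simp add: y_def)
  moreover have "3 * e^2 \<le> 2 * (5/6 * y)^2"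
  proof -
    have "3 * 3 \<le> pi * pi" using pi_gt3 by (intro mult_mono) auto
    then have "3 * e^2 \<le> 25/72 * (pi * pi) * e^2" by (intro mult_right_mono) auto
    then show ?thesis by (simp add: y_def power2_eq_square mult_ac)
  qed
  ultimately have cos_le: "cos (pi * e) \<le> 1 - 3 * e^2"
    by linarith
  have "0 \<le> pi * e" and "pi * e \<le> pi * (1/2)"
    using assms by (auto intro: mult_left_mono)
  then have "0 \<le> cos (pi * e)"
    using pi_gt_zero by (intro cos_ge_zero) linarith+
  then have "cos (pi * e)^2 \<le> cos (pi * e)"
    by (simp add: power2_eq_square mult_left_le_one_le)
  also have "\<dots> \<le> exp (- 3 * e^2)"
    using cos_le exp_ge_add_one_self[of "- 3 * e^2"] by simp
  finally show ?thesis .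
qed

lemma ln_less_four_root: "0 < x \<Longrightarrow> ln x < 4 * root 4 x"
proof -
  assume "0 < x"
  then have "ln x = 4 * ln (root 4 x)"
    by (simp add: ln_root)
  also have "\<dots> < 4 * root 4 x"
    using \<open>0 < x\<close> by (simp add: ln_less_self)
  finally show ?thesis .
qed

lemma cubic_bound_of_hypothesis:
  fixes n D :: nat and e :: real
  assumes "3 \<le> n" and "0 < e" and "e \<le> 1/2"
    and "real n^3 * 3^(n-1) / 2^(n+1) < real D^2 * e^(2*n)"
  shows "9/16 * real n^3 < real D^2 * e^6"
proof -
  obtain m where n: "n = m + 3"
    using assms(1) by (metis add.commute le_Suc_ex)
  have "(9/16::real) \<le> 9/16 * (3/2)^m"
    by (simp add: one_le_power)
  also have "\<dots> = 3^(n-1) / 2^(n+1)"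
    by (simp add: n power_add power_divide)
  finally have "9/16 * real n^3 \<le> 3^(n-1) / 2^(n+1) * real n^3"
    by (rule mult_right_mono) simp
  also have "\<dots> = real n^3 * 3^(n-1) / 2^(n+1)"
    by simp
  also have "\<dots> < real D^2 * e^(2*n)"
    by (fact assms(4))
  also have "\<dots> \<le> real D^2 * e^6"
    using assms by (intro mult_left_mono power_decreasing) auto
  finally show ?thesis .
qed

lemma quartic_bound_of_cubic_bound:
  fixes n D :: nat and e :: real
  assumes "1 \<le> n" and "0 < e" and "e \<le> 1/2" and "9/16 * real n^3 < real D^2 * e^6"
  shows "64 * real n^4 \<le> 81 * e^8 * real D^3"
proof -
  define Y where "Y = real D^2 * e^6"
  have "(9/16 * real n^3)^3 \<le> Y^3"
    using assms(4) by (intro power_mono) (auto simp: Y_def)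
  moreover have "(9/16 * real n^3)^3 = (9/16)^3 * real n^(3*3)"
    by (simp only: power_mult_distrib power_mult)
  moreover have "(9/16::real)^3 = 729/4096"
    by (simp add: power3_eq_cube)
  ultimately have Y3: "729/4096 * real n^9 \<le> Y^3"
    by simp
  have "e^2 \<le> (1/2)^2"
    using assms(2,3) by (intro power_mono) auto
  then have "6561 * Y^3 * (4 * e^2) \<le> 6561 * Y^3 * 1"
    by (intro mult_left_mono) (auto simp: Y_def power2_eq_square)
  then have "6561 * 4 * Y^3 \<le> 6561 * Y^3 / e^2"
    using assms(2) by (simp add: field_simps)
  have "(64 * real n^4)^2 = 4096 * real n^8"
    by (simp flip: power_mult)
  also have "\<dots> \<le> 4096 * real n^9"
    using assms(1) by (simp add: power_increasing)
  also have "\<dots> \<le> 6561 * 4 * Y^3"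
    using Y3 zero_le_power[of "real n" 9] by linarith
  also have "\<dots> \<le> 6561 * Y^3 / e^2"
    by fact
  also have "\<dots> = (81 * e^8 * real D^3)^2"
    using assms(2) by (simp add: Y_def field_simps power_mult_distrib flip: power_mult power_add)
  finally show ?thesis
    by (rule power2_le_imp_le) simp
qed

lemma root_bound_of_quartic_bound:
  fixes n D :: nat and e :: real
  assumes "64 * real n^4 \<le> 81 * e^8 * real D^3"
  shows "2 * real n * root 4 (4 * real D) \<le> 3 * e^2 * real D"
proof -
  have "64 * real n^4 * real D \<le> 81 * e^8 * real D^3 * real D"
    using assms by (intro mult_right_mono) auto
  moreover have "(2 * real n * root 4 (4 * real D))^4 = 64 * real n^4 * real D"
    by (simp add: power_mult_distrib)
  moreover have "(3 * e^2 * real D)^4 = 81 * e^8 * real D^3 * real D"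
    by (simp add: power_mult_distrib eval_nat_numeral)
  ultimately have "(2 * real n * root 4 (4 * real D))^4 \<le> (3 * e^2 * real D)^4"
    by linarith
  then show ?thesis
    using power_mono_iff[of "2 * real n * root 4 (4 * real D)" "3 * e^2 * real D" 4] by simp
qed

lemma power_less_exp_of_hypothesis:
  fixes n D :: nat and e :: real
  assumes "3 \<le> n" and "0 < e" and "e < 1/2" and "1 \<le> D"
    and "real n^3 * 3^(n-1) / 2^(n+1) < real D^2 * e^(2*n)"
  shows "(4 * real D)^n < exp (6 * e^2 * real D)"
proof -
  have "9/16 * real n^3 < real D^2 * e^6"
    using assms(3) by (intro cubic_bound_of_hypothesis[OF assms(1,2) _ assms(5)]) simp
  then have "64 * real n^4 \<le> 81 * e^8 * real D^3"
    using assms(1,3) by (intro quartic_bound_of_cubic_bound[OF _ assms(2)]) simp_all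
  then have "2 * real n * root 4 (4 * real D) \<le> 3 * e^2 * real D"
    by (rule root_bound_of_quartic_bound)
  moreover have "real n * ln (4 * real D) < real n * (4 * root 4 (4 * real D))"
    using assms(1,4) by (intro mult_strict_left_mono ln_less_four_root) auto
  ultimately have "real n * ln (4 * real D) < 6 * e^2 * real D"
    by linarith
  moreover have "(4 * real D)^n = exp (real n * ln (4 * real D))"
    using assms(4) by (simp add: exp_ln_iff ln_realpow[symmetric])
  ultimately show ?thesis
    by simp
qed

lemma central_binomial_power_lower_bound:
  assumes "1 \<le> D"
  shows "1 \<le> (real (2*D choose D) / 4^D)^(2*n) * (4 * real D)^n"
proof -
  define C where "C = real (2*D choose D)"
  have "(4::real)^D * 4^D = 16^D"
    by (simp flip: power_mult_distrib)
  then have "(C / 4^D)^2 * (4 * real D) = 4 * real D * C^2 / 16^D"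
    by (simp add: power_divide power2_eq_square)
  then have "1 \<le> (C / 4^D)^2 * (4 * real D)"
    using central_binomial_sq_lower_bound[OF assms] by (simp add: C_def)
  then show ?thesis
    using one_le_power[of "(C / 4^D)^2 * (4 * real D)" n]
    by (simp add: C_def power_mult power_mult_distrib)
qed

lemma cos_pi_power_less_central_binomial_power:
  fixes n D :: nat and e :: real
  assumes "3 \<le> n" and "0 < e" and "e < 1/2" and "1 \<le> D"
    and "real n^3 * 3^(n-1) / 2^(n+1) < real D^2 * e^(2*n)"
  shows "cos (pi * e)^(2*D) < (real (2*D choose D) / 4^D)^n"
proof -
  define \<beta> where "\<beta> = real (2*D choose D) / 4^D"
  have "cos (pi * e)^(4*D) = (cos (pi * e)^2)^(2*D)"
    by (simp flip: power_mult)
  also have "\<dots> \<le> exp (- 3 * e^2)^(2*D)"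
    using assms by (intro power_mono cos_pi_sq_le_exp) auto
  also have "\<dots> = exp (- (6 * e^2 * real D))"
    by (simp flip: exp_of_nat_mult)
  finally have "cos (pi * e)^(4*D) * (4 * real D)^n \<le> exp (- (6 * e^2 * real D)) * (4 * real D)^n"
    by (intro mult_right_mono) auto
  also have "\<dots> < exp (- (6 * e^2 * real D)) * exp (6 * e^2 * real D)"
    using power_less_exp_of_hypothesis[OF assms] by (intro mult_strict_left_mono) auto
  also have "\<dots> \<le> \<beta>^(2*n) * (4 * real D)^n"
    using central_binomial_power_lower_bound[OF assms(4)] by (simp add: \<beta>_def flip: exp_add)
  finally have "cos (pi * e)^(4*D) < \<beta>^(2*n)"
    by (rule mult_right_less_imp_less) simp
  moreover have "cos (pi * e)^(4*D) = (cos (pi * e)^(2*D))^2" and "\<beta>^(2*n) = (\<beta>^n)^2"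
    by (simp_all flip: power_mult add: mult.commute)
  ultimately have "(cos (pi * e)^(2*D))^2 < (\<beta>^n)^2"
    by simp
  then show ?thesis
    unfolding \<beta>_def by (rule power_less_imp_less_base) simp
qed

section \<open>Speeds without small integer relations\<close>

lemma bezout_time_mod_one:
  fixes a b g s h :: nat and u v :: int
  assumes "u * int a + v * int b = int g" and "a + b = g * s" and "0 < g" and "0 < s"
  defines "t \<equiv> real_of_int ((u - v) * int h) / real (g * s)"
  shows "t * real a = real h / real s - of_int (v * int h)"
    and "t * real b = of_int (u * int h) - real h / real s"
proof -
  have uv: "of_int u * real a + of_int v * real b = real g"
    using assms(1) by (metis of_int_add of_int_mult of_int_of_nat_eq)
  have ab: "real a + real b = real g * real s"
    using assms(2) by (metis of_nat_add of_nat_mult)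
  have t: "t * (real g * real s) = (of_int u - of_int v) * real h"
    using assms(3,4) by (simp add: t_def)
  have "t * real a * real s * real g = (real h - of_int v * real h * real s) * real g"
    using t uv ab by algebra
  moreover have "t * real b * real s * real g = (of_int u * real h * real s - real h) * real g"
    using t uv ab by algebra
  ultimately have "t * real a * real s = real h - of_int v * real h * real s"
    and "t * real b * real s = of_int u * real h * real s - real h"
    using assms(3) by simp_all
  then show "t * real a = real h / real s - of_int (v * int h)"
    and "t * real b = of_int (u * int h) - real h / real s"
    using assms(4) by (simp_all add: field_simps)
qed

lemma two_speeds_lonely_time:
  fixes a b :: nat
  assumes "0 < a + b"
  defines "s \<equiv> (a + b) div gcd a b"
  shows "\<exists>t. dist_nint (t * real a) = real (s div 2) / real s \<and>
             dist_nint (t * real b) = real (s div 2) / real s"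
proof -
  define g where "g = gcd a b"
  have "0 < g" using assms(1) by (simp add: g_def)
  have "a + b = g * s"
    unfolding s_def g_def by (metis dvd_add gcd_dvd1 gcd_dvd2 dvd_mult_div_cancel)
  then have "0 < s" using assms(1) by (simp add: g_def)
  obtain u v :: int where "u * int a + v * int b = int g"
    using bezout_int[of "int a" "int b"] by (auto simp: g_def)
  then obtain t where ta: "t * real a = real (s div 2) / real s - of_int (v * int (s div 2))"
    and tb: "t * real b = of_int (u * int (s div 2)) - real (s div 2) / real s"
    using bezout_time_mod_one \<open>a + b = g * s\<close> \<open>0 < g\<close> \<open>0 < s\<close> by blast
  have "0 \<le> real (s div 2) / real s" and "real (s div 2) / real s \<le> 1/2"
    using \<open>0 < s\<close> by (auto simp: field_simps)
  then have "dist_nint (t * real a) = real (s div 2) / real s"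
    and "dist_nint (t * real b) = real (s div 2) / real s"
    using dist_nint_eq_abs_diff[of "t * real a" "- (v * int (s div 2))"]
      dist_nint_eq_abs_diff[of "t * real b" "u * int (s div 2)"]
    by (simp_all add: ta tb)
  then show ?thesis
    by blast
qed

definition nonzero_coeffs :: "nat \<Rightarrow> nat \<Rightarrow> (nat \<Rightarrow> int) set" where
  "nonzero_coeffs n D = PiE {..<n} (\<lambda>_. {-int D..int D}) - {\<lambda>i\<in>{..<n}. 0}"

lemma finite_nonzero_coeffs: "finite (nonzero_coeffs n D)"
  by (simp add: nonzero_coeffs_def finite_PiE)

lemma card_nonzero_coeffs: "card (nonzero_coeffs n D) = (2 * D + 1)^n - 1"
  by (simp add: nonzero_coeffs_def card_Diff_singleton card_PiE nat_add_distrib nat_mult_distrib)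

lemma nonzero_coeffs_nonzero: "k \<in> nonzero_coeffs n D \<Longrightarrow> \<exists>j<n. k j \<noteq> 0"
  by (auto simp: nonzero_coeffs_def PiE_iff extensional_def fun_eq_iff split: if_splits)

lemma half_floor_ratio_ge:
  fixes D s :: nat and e :: real
  assumes "0 < e" and "e < 1/2" and "3 < real D^2 * e^4" and "D < s"
  shows "1/2 - e \<le> real (s div 2) / real s"
proof -
  have "1 < real D * e^2"
  proof (rule ccontr)
    assume "\<not> ?thesis"
    then have "(real D * e^2)^2 \<le> 1^2"
      using assms(1) by (intro power_mono) auto
    then show False
      using assms(3) by (simp add: power_mult_distrib flip: power_mult)
  qed
  moreover have "e * e \<le> e * (1/2)"
    using assms(1,2) by (intro mult_left_mono) auto
  then have "real D * (e * e) \<le> real D * (e * (1/2))"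
    by (rule mult_left_mono) simp
  ultimately have "2 < real D * e"
    by (simp add: power2_eq_square mult.assoc)
  also have "\<dots> < real s * e"
    using assms(1,4) by simp
  finally show ?thesis
    using assms(4) by (simp add: field_simps)
qed

lemma lonely_time_two_of_no_small_relation:
  fixes xs :: "nat list" and D :: nat and e :: real
  assumes "length xs = 2" and "0 \<notin> set xs" and "0 < e" and "e < 1/2"
    and "3 < real D^2 * e^4"
    and no_relation: "\<And>k. k \<in> nonzero_coeffs 2 D \<Longrightarrow> (\<Sum>i<2. k i * int (xs!i)) \<noteq> 0"
  shows "\<exists>t. \<forall>i<2. 1/2 - e \<le> dist_nint (t * real (xs!i))"
proof -
  define a b where "a = xs!0" and "b = xs!1"
  have "0 < a" "0 < b"
    using assms(1,2) by (auto simp: a_def b_def in_set_conv_nth)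
  define g where "g = gcd a b"
  define s where "s = (a + b) div g"
  have "0 < g" using \<open>0 < a\<close> by (simp add: g_def)
  obtain a' b' where a': "a = a' * g" and b': "b = b' * g"
    unfolding g_def by (metis dvd_def gcd_dvd1 gcd_dvd2 mult.commute)
  have "D < b' \<or> D < a'"
  proof (rule ccontr)
    assume small: "\<not> ?thesis"
    define k where "k = (\<lambda>i\<in>{..<2::nat}. if i = 0 then int b' else - int a')"
    have "k \<in> nonzero_coeffs 2 D"
      using small \<open>0 < b\<close> b' by (auto simp: k_def nonzero_coeffs_def PiE_iff fun_eq_iff)
    moreover have "(\<Sum>i<2. k i * int (xs!i)) = int b' * int a - int a' * int b"
      by (simp add: k_def numeral_2_eq_2 a_def b_def)
    ultimately show False
      using no_relation by (fastforce simp: a' b')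
  qed
  moreover have "s = a' + b'"
    using \<open>0 < g\<close> by (simp add: s_def a' b' flip: distrib_right)
  ultimately have "1/2 - e \<le> real (s div 2) / real s"
    using assms(3-5) by (intro half_floor_ratio_ge) auto
  moreover obtain t where "dist_nint (t * real a) = real (s div 2) / real s"
      and "dist_nint (t * real b) = real (s div 2) / real s"
    using two_speeds_lonely_time[of a b] \<open>0 < a\<close> by (auto simp: s_def g_def)
  ultimately show ?thesis
    by (intro exI[of _ t]) (auto simp: a_def b_def less_2_cases_iff)
qed

lemma prod_even_power_le:
  fixes g :: "'a \<Rightarrow> real"
  assumes "finite I" and "i \<in> I" and "\<And>j. j \<in> I \<Longrightarrow> \<bar>g j\<bar> \<le> 1" and "\<bar>g i\<bar> \<le> c"
  shows "(\<Prod>j\<in>I. g j ^ (2*d)) \<le> c ^ (2*d)"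
proof -
  have "(\<Prod>j\<in>I. g j ^ (2*d)) = \<bar>g i\<bar> ^ (2*d) * (\<Prod>j\<in>I - {i}. \<bar>g j\<bar> ^ (2*d))"
    using assms(1,2) by (simp add: prod.remove power_even_abs)
  also have "\<dots> \<le> c ^ (2*d) * 1"
    using assms by (intro mult_mono power_mono prod_le_1 prod_nonneg) (auto intro: power_le_one)
  finally show ?thesis by simp
qed

lemma lonely_time_of_no_small_relation:
  fixes xs :: "nat list" and n D :: nat and e :: real
  assumes "length xs = n" and "3 \<le> n" and "0 < e" and "e < 1/2" and "1 \<le> D"
    and "real n^3 * 3^(n-1) / 2^(n+1) < real D^2 * e^(2*n)"
    and no_relation: "\<And>k. k \<in> nonzero_coeffs n D \<Longrightarrow> (\<Sum>i<n. k i * int (xs!i)) \<noteq> 0"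
  shows "\<exists>t. \<forall>i<n. 1/2 - e \<le> dist_nint (t * real (xs!i))"
proof (rule ccontr)
  assume no_time: "\<nexists>t. \<forall>i<n. 1/2 - e \<le> dist_nint (t * real (xs!i))"
  have upper: "(\<Prod>i<n. sin (pi * (t * real (xs!i))) ^ (2*D)) \<le> cos (pi * e) ^ (2*D)" for t
  proof -
    obtain i where "i < n" and "dist_nint (t * real (xs!i)) < 1/2 - e"
      using no_time by (auto simp: not_le)
    then have "\<bar>sin (pi * (t * real (xs!i)))\<bar> \<le> cos (pi * e)"
      using abs_sin_pi_less_cos_of_dist_nint_less[of e] assms(3) by fastforce
    then show ?thesis
      using \<open>i < n\<close> by (intro prod_even_power_le) auto
  qed
  have "((\<lambda>t. \<Prod>i<n. sin (pi * (t * real (xs!i))) ^ (2*D)) has_integral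
      (real (2*D choose D) / 4^D) ^ card {..<n}) {0..1}"
  proof (rule has_integral_prod_sin_power)
    fix k assume "k \<in> PiE {..<n} (\<lambda>_. {-int D..int D})" and "(\<Sum>i<n. k i * int (xs!i)) = 0"
    then show "k = (\<lambda>i\<in>{..<n}. 0)"
      using no_relation unfolding nonzero_coeffs_def by blast
  qed simp
  moreover have "((\<lambda>t::real. cos (pi * e) ^ (2*D)) has_integral cos (pi * e) ^ (2*D)) {0..1}"
    using has_integral_const_real[of "cos (pi * e) ^ (2*D)" 0 1] by simp
  ultimately have "(real (2*D choose D) / 4^D) ^ card {..<n} \<le> cos (pi * e) ^ (2*D)"
    using upper by (rule has_integral_le)
  then show False
    using cos_pi_power_less_central_binomial_power[OF assms(2-6)] by simp
qed

lemma max_loneliness_ge_of_no_small_relation: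
  fixes xs :: "nat list" and n D :: nat and e :: real
  assumes "length xs = n" and "1 \<le> n" and "0 \<notin> set xs" and "0 < e" and "1 \<le> D"
    and "real n^3 * 3^(n-1) / 2^(n+1) < real D^2 * e^(2*n)"
    and "\<And>k. k \<in> nonzero_coeffs n D \<Longrightarrow> (\<Sum>i<n. k i * int (xs!i)) \<noteq> 0"
  shows "1/2 - e \<le> max_loneliness (set xs)"
proof -
  have "\<exists>t. \<forall>i<n. 1/2 - e \<le> dist_nint (t * real (xs!i))"
  proof (cases "e < 1/2")
    case False
    then show ?thesis
      using dist_nint_nonneg by (intro exI[of _ 0]) (auto intro: order_trans[OF _ dist_nint_nonneg])
  next
    case True
    consider "n = 1" | "n = 2" | "3 \<le> n"
      using assms(2) by linarith
    then show ?thesis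
    proof cases
      case 1
      have "xs!0 \<noteq> 0"
        using assms(1,3) 1 by (metis nth_mem zero_less_one)
      then have "dist_nint (1 / (2 * real (xs!0)) * real (xs!0)) = 1/2"
        using dist_nint_eq_abs_diff[of "1/2" 0] by simp
      then show ?thesis
        using 1 assms(4) by (intro exI[of _ "1 / (2 * real (xs!0))"]) auto
    next
      case 2
      then show ?thesis
        using lonely_time_two_of_no_small_relation[where xs=xs and D=D and e=e] assms True by simp
    next
      case 3
      show ?thesis
        using lonely_time_of_no_small_relation[OF assms(1) 3 assms(4) True assms(5-7)] .
    qed
  qed
  then obtain t where "\<forall>i<n. 1/2 - e \<le> dist_nint (t * real (xs!i))" ..
  then show ?thesis
    using assms(1,2) by (intro max_loneliness_ge[of _ _ t]) (auto simp: in_set_conv_nth)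
qed

section \<open>Counting tuples of distinct elements\<close>

definition distinct_lists :: "nat \<Rightarrow> 'a set \<Rightarrow> 'a list set" where
  "distinct_lists n S = {xs. length xs = n \<and> distinct xs \<and> set xs \<subseteq> S}"

lemma finite_distinct_lists: "finite S \<Longrightarrow> finite (distinct_lists n S)"
  unfolding distinct_lists_def
  by (rule finite_subset[OF _ finite_lists_length_eq[of S n]]) auto

lemma card_distinct_lists_Suc:
  assumes "finite S" and "n < card S"
  shows "card (distinct_lists (Suc n) S) = (card S - n) * card (distinct_lists n S)"
proof -
  have "card (distinct_lists (Suc n) S) = \<Prod>{card S - n .. card S}"
    unfolding distinct_lists_def using assms by (subst card_lists_distinct_length_eq) (auto simp: Suc_diff_Suc)
  also have "\<dots> = (card S - n) * \<Prod>{Suc (card S - n) .. card S}"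
    using assms by (intro prod.atLeast_Suc_atMost) auto
  also have "\<Prod>{Suc (card S - n) .. card S} = card (distinct_lists n S)"
    unfolding distinct_lists_def using assms
    by (subst card_lists_distinct_length_eq) (auto simp: Suc_diff_le)
  finally show ?thesis .
qed

lemma card_distinct_lists_with_set:
  assumes "finite S"
  shows "card {xs \<in> distinct_lists n S. P (set xs)} = card {V. V \<subseteq> S \<and> card V = n \<and> P V} * fact n"
proof -
  define W where "W = {V. V \<subseteq> S \<and> card V = n \<and> P V}"
  have "finite W"
    using assms unfolding W_def by (rule finite_subset[rotated, OF finite_Pow_iff[THEN iffD2]]) auto
  have "{xs \<in> distinct_lists n S. P (set xs)} = (\<Union>V\<in>W. permutations_of_set V)"
    by (auto simp: W_def distinct_lists_def permutations_of_set_def distinct_card)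
  also have "card \<dots> = (\<Sum>V\<in>W. card (permutations_of_set V))"
    using \<open>finite W\<close> by (intro card_UN_disjoint ballI finite_permutations_of_set)
      (auto simp: permutations_of_set_def)
  also have "\<dots> = (\<Sum>V\<in>W. fact n)"
    using assms by (intro sum.cong) (auto simp: W_def dest: finite_subset)
  finally show ?thesis
    by (simp add: W_def)
qed

lemma prob_subset_eq_distinct_lists:
  assumes "finite S"
  shows "prob_subset S n P =
    real (card {xs \<in> distinct_lists n S. P (set xs)}) / real (card (distinct_lists n S))"
  using card_distinct_lists_with_set[OF assms, of n P] card_distinct_lists_with_set[OF assms, of n "\<lambda>_. True"]
  by (simp add: prob_subset_def)

lemma nth_take_drop_Suc:
  assumes "j < length xs" and "i < length xs" and "i \<noteq> j"
  shows "(take j xs @ drop (Suc j) xs) ! (if i < j then i else i - 1) = xs ! i"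
  using assms by (auto simp: nth_append min_def)

lemma relation_solution_eq_of_delete_eq:
  fixes k :: "nat \<Rightarrow> int"
  assumes "length xs = n" and "length ys = n" and "j < n" and "k j \<noteq> 0"
    and "take j xs @ drop (Suc j) xs = take j ys @ drop (Suc j) ys"
    and "(\<Sum>i<n. k i * int (xs!i)) = 0" and "(\<Sum>i<n. k i * int (ys!i)) = 0"
  shows "xs = ys"
proof -
  have off_j: "xs!i = ys!i" if "i < n" and "i \<noteq> j" for i
    using nth_take_drop_Suc[of j xs i] nth_take_drop_Suc[of j ys i] assms(1-3,5) that by simp
  have "(\<Sum>i<n. k i * int (xs!i)) = k j * int (xs!j) + (\<Sum>i\<in>{..<n}-{j}. k i * int (xs!i))"
    and "(\<Sum>i<n. k i * int (ys!i)) = k j * int (ys!j) + (\<Sum>i\<in>{..<n}-{j}. k i * int (ys!i))"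
    using assms(3) by (simp_all add: sum.remove)
  moreover have "(\<Sum>i\<in>{..<n}-{j}. k i * int (xs!i)) = (\<Sum>i\<in>{..<n}-{j}. k i * int (ys!i))"
    by (intro sum.cong) (auto simp: off_j)
  ultimately have "k j * int (xs!j) = k j * int (ys!j)"
    using assms(6,7) by linarith
  then have "xs!j = ys!j"
    using assms(4) by simp
  then show "xs = ys"
    using assms(1,2) off_j by (intro nth_equalityI) auto
qed

lemma card_distinct_lists_relation_le:
  fixes k :: "nat \<Rightarrow> int"
  assumes "finite S" and "j < n" and "k j \<noteq> 0" and "n \<le> card S"
  shows "card {xs \<in> distinct_lists n S. (\<Sum>i<n. k i * int (xs!i)) = 0} * (card S - n + 1)
           \<le> card (distinct_lists n S)"
proof -
  define A where "A = {xs \<in> distinct_lists n S. (\<Sum>i<n. k i * int (xs!i)) = 0}"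
  define h where "h xs = take j xs @ drop (Suc j) xs" for xs :: "nat list"
  have "h ` A \<subseteq> distinct_lists (n - 1) S"
  proof
    fix ys assume "ys \<in> h ` A"
    then obtain xs where "xs \<in> A" and ys: "ys = h xs" by auto
    then have xs: "length xs = n" "distinct xs" "set xs \<subseteq> S"
      by (auto simp: A_def distinct_lists_def)
    then have "distinct (take j xs @ xs!j # drop (Suc j) xs)"
      using assms(2) by (simp flip: id_take_nth_drop)
    then show "ys \<in> distinct_lists (n - 1) S"
      using xs assms(2) set_take_subset[of j xs] set_drop_subset[of "Suc j" xs]
      by (auto simp: ys h_def distinct_lists_def)
  qed
  moreover have "inj_on h A"
  proof (rule inj_onI)
    fix xs ys assume "xs \<in> A" and "ys \<in> A" and "h xs = h ys"
    then show "xs = ys"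
      using assms(2,3) by (intro relation_solution_eq_of_delete_eq[of xs n ys j k])
        (simp_all add: A_def distinct_lists_def h_def)
  qed
  ultimately have "card A \<le> card (distinct_lists (n - 1) S)"
    using finite_distinct_lists[OF assms(1)] by (intro card_inj_on_le)
  then have "card A * (card S - n + 1) \<le> card (distinct_lists (n - 1) S) * (card S - (n - 1))"
    using assms(2,4) by (intro mult_mono) auto
  also have "\<dots> = card (distinct_lists n S)"
    using card_distinct_lists_Suc[OF assms(1), of "n - 1"] assms(2,4) by simp
  finally show ?thesis
    by (simp add: A_def)
qed

lemma distinct_lists_nonempty:
  assumes "finite S" and "n \<le> card S"
  shows "distinct_lists n S \<noteq> {}"
proof -
  obtain V where "V \<subseteq> S" and "card V = n"
    using obtain_subset_with_card_n[OF assms(2)] by blast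
  moreover obtain xs where "set xs = V" and "distinct xs"
    using finite_distinct_list[OF finite_subset[OF \<open>V \<subseteq> S\<close> assms(1)]] by blast
  ultimately show ?thesis
    by (auto simp: distinct_lists_def distinct_card)
qed

lemma card_distinct_lists_not_le:
  fixes K :: "(nat \<Rightarrow> int) set"
  assumes "finite S" and "n \<le> card S" and "finite K"
    and nonzero: "\<And>k. k \<in> K \<Longrightarrow> \<exists>j<n. k j \<noteq> 0"
    and good: "\<And>xs. xs \<in> distinct_lists n S \<Longrightarrow>
      (\<And>k. k \<in> K \<Longrightarrow> (\<Sum>i<n. k i * int (xs!i)) \<noteq> 0) \<Longrightarrow> P (set xs)"
  shows "card {xs \<in> distinct_lists n S. \<not> P (set xs)} * (card S - n + 1)
           \<le> card K * card (distinct_lists n S)"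
proof -
  define L where "L = distinct_lists n S"
  define A where "A k = {xs \<in> L. (\<Sum>i<n. k i * int (xs!i)) = 0}" for k :: "nat \<Rightarrow> int"
  have "{xs \<in> L. \<not> P (set xs)} \<subseteq> (\<Union>k\<in>K. A k)"
    using good by (auto simp: A_def L_def)
  then have "card {xs \<in> L. \<not> P (set xs)} \<le> (\<Sum>k\<in>K. card (A k))"
    using finite_distinct_lists[OF assms(1)] assms(3)
    by (intro order_trans[OF card_mono card_UN_le]) (auto simp: A_def L_def)
  then have "card {xs \<in> L. \<not> P (set xs)} * (card S - n + 1) \<le> (\<Sum>k\<in>K. card (A k)) * (card S - n + 1)"
    by (rule mult_right_mono) simp
  also have "\<dots> = (\<Sum>k\<in>K. card (A k) * (card S - n + 1))"
    by (rule sum_distrib_right)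
  also have "\<dots> \<le> (\<Sum>k\<in>K. card L)"
  proof (rule sum_mono)
    fix k assume "k \<in> K"
    then obtain j where "j < n" and "k j \<noteq> 0"
      using nonzero by blast
    then show "card (A k) * (card S - n + 1) \<le> card L"
      unfolding A_def L_def using assms(1,2) by (rule_tac card_distinct_lists_relation_le) auto
  qed
  finally show ?thesis
    by (simp add: L_def)
qed

lemma prob_subset_ge_of_relations:
  fixes K :: "(nat \<Rightarrow> int) set"
  assumes "finite S" and "n \<le> card S" and "finite K"
    and "\<And>k. k \<in> K \<Longrightarrow> \<exists>j<n. k j \<noteq> 0"
    and "\<And>xs. xs \<in> distinct_lists n S \<Longrightarrow>
      (\<And>k. k \<in> K \<Longrightarrow> (\<Sum>i<n. k i * int (xs!i)) \<noteq> 0) \<Longrightarrow> P (set xs)"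
  shows "1 - real (card K) / real (card S - n + 1) \<le> prob_subset S n P"
proof -
  define L where "L = distinct_lists n S"
  define B where "B = {xs \<in> L. \<not> P (set xs)}"
  have "finite L" and "L \<noteq> {}"
    using assms(1,2) by (simp_all add: L_def finite_distinct_lists distinct_lists_nonempty)
  then have "0 < card L"
    by (simp add: card_gt_0_iff)
  have "card B * (card S - n + 1) \<le> card K * card L"
    unfolding B_def L_def using assms by (rule card_distinct_lists_not_le)
  then have "real (card B) * real (card S - n + 1) \<le> real (card K) * real (card L)"
    by (simp only: of_nat_mult[symmetric] of_nat_le_iff)
  then have "real (card B) / real (card L) \<le> real (card K) / real (card S - n + 1)"
    using \<open>0 < card L\<close> by (simp add: field_simps)
  moreover have "card {xs \<in> L. P (set xs)} = card L - card B"
    using \<open>finite L\<close> by (subst card_Diff_subset[symmetric])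
      (auto simp: B_def intro: arg_cong[where f=card])
  moreover have "card B \<le> card L"
    using \<open>finite L\<close> by (intro card_mono) (auto simp: B_def)
  ultimately show ?thesis
    using \<open>0 < card L\<close> assms(1)
    by (simp add: prob_subset_eq_distinct_lists L_def of_nat_diff diff_divide_distrib)
qed

lemma prob_subset_lonely_ge:
  fixes n D :: nat and e :: real
  assumes "0 < n" and "0 < e" and "finite S" and "0 \<notin> S" and "n \<le> card S" and "1 \<le> D"
    and "real n^3 * 3^(n-1) / 2^(n+1) < real D^2 * e^(2*n)"
  shows "1 - real (card (nonzero_coeffs n D)) / real (card S - n + 1)
           \<le> prob_subset S n (\<lambda>V. max_loneliness V \<ge> 1/2 - e)"
proof (rule prob_subset_ge_of_relations[OF assms(3,5) finite_nonzero_coeffs nonzero_coeffs_nonzero])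
  fix xs assume xs: "xs \<in> distinct_lists n S"
    and "\<And>k. k \<in> nonzero_coeffs n D \<Longrightarrow> (\<Sum>i<n. k i * int (xs!i)) \<noteq> 0"
  moreover have "length xs = n" and "0 \<notin> set xs"
    using xs assms(4) by (auto simp: distinct_lists_def)
  ultimately show "1/2 - e \<le> max_loneliness (set xs)"
    using assms(1,2,6,7) by (intro max_loneliness_ge_of_no_small_relation) auto
qed

lemma degree_hypothesis_of_sqrt_less:
  fixes n D :: nat and e :: real
  assumes "0 < e" and "sqrt (real n ^ 3 * 3 ^ (n - 1) / (2 ^ (n + 1) * e ^ (2 * n))) < real D"
  shows "1 \<le> D" and "real n^3 * 3^(n-1) / 2^(n+1) < real D^2 * e^(2*n)"
proof -
  have "0 \<le> sqrt (real n ^ 3 * 3 ^ (n - 1) / (2 ^ (n + 1) * e ^ (2 * n)))"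
    using assms(1) by simp
  then show "1 \<le> D"
    using assms(2) by linarith
  have "sqrt (real n ^ 3 * 3 ^ (n - 1) / (2 ^ (n + 1) * e ^ (2 * n))) < sqrt (real D ^ 2)"
    using assms(2) by simp
  then have "real n ^ 3 * 3 ^ (n - 1) / (2 ^ (n + 1) * e ^ (2 * n)) < real D ^ 2"
    by (simp only: real_sqrt_less_iff)
  then show "real n^3 * 3^(n-1) / 2^(n+1) < real D^2 * e^(2*n)"
    using assms(1) by (simp add: field_simps)
qed

theorem theorem12p3:
  fixes n N :: nat and \<epsilon> :: real and S :: "nat set"
  assumes "n > 0" and "\<epsilon> > 0"
    and "finite S" and "0 \<notin> S" and "card S = N" and "n < N"
    and "sqrt (real n ^ 3 * 3 ^ (n - 1) / (2 ^ (n + 1) * \<epsilon> ^ (2 * n))) + 1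
           < real N powr (1 / real (n + 1))"
  shows "prob_subset S n (\<lambda>V. max_loneliness V \<ge> 1/2 - \<epsilon>)
           > 1 - (2 * real N powr (1 / real (n + 1)) + 1) ^ n / (real N - real n)"
proof -
  define M where "M = real N powr (1 / real (n + 1))"
  define D where "D = nat \<lfloor>M\<rfloor>"
  have "real D \<le> M" and "M < real D + 1"
    using assms(6) by (auto simp: D_def M_def)
  then have "sqrt (real n ^ 3 * 3 ^ (n - 1) / (2 ^ (n + 1) * \<epsilon> ^ (2 * n))) < real D"
    using assms(7) by (simp add: M_def)
  then have "1 - real (card (nonzero_coeffs n D)) / real (card S - n + 1)
      \<le> prob_subset S n (\<lambda>V. max_loneliness V \<ge> 1/2 - \<epsilon>)"
    using assms(1-6) degree_hypothesis_of_sqrt_less[OF assms(2)]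
    by (intro prob_subset_lonely_ge) auto
  moreover have "real (card (nonzero_coeffs n D)) / real (card S - n + 1) < (2 * M + 1) ^ n / (real N - real n)"
  proof -
    have "real (card (nonzero_coeffs n D)) < (2 * real D + 1) ^ n"
      by (simp add: card_nonzero_coeffs of_nat_diff add.commute)
    also have "\<dots> \<le> (2 * M + 1) ^ n"
      using \<open>real D \<le> M\<close> by (intro power_mono) auto
    finally show ?thesis
      using assms(5,6) by (intro frac_less) auto
  qed
  ultimately show ?thesis
    by (simp add: M_def)
qed

end
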